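(* Let $\lambda\in\mathbb{R}$, let $r,n\ge1$ be integers and let $z\in\mathbb{C}$. Then \[ \phi_{n,\lambda}^{(r,r)}(|z|^2)=\langle z|\prod_{k=0}^{n-1}\big[(a^{\dagger})^{r}a^{r}-k\lambda\big]|z\rangle=\sum_{p=0}^{nr}\sum_{k=p}^{nr}\frac{(-1)^{k-p}}{k!}\binom{k}{p}\big((p)_r\big)_{n,\lambda}\,(|z|^2)^{k}. \] In particular, when $|z|=1$, \[ \phi_{n,\lambda}^{(r,r)}=\langle z|\prod_{k=0}^{n-1}\big[(a^{\dagger})^{r}a^{r}-k\lambda\big]|z\rangle=\sum_{p=0}^{nr}\sum_{k=p}^{nr}\frac{(-1)^{k-p}}{k!}\binom{k}{p}\big((p)_r\big)_{n,\lambda}. \]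
   Context: Notation: $(x)_0=1$, $(x)_m=x(x-1)\cdots(x-m+1)$; $(y)_{0,\lambda}=1$, $(y)_{n,\lambda}=y(y-\lambda)\cdots(y-(n-1)\lambda)$. The boson annihilation and creation operators $a,a^{\dagger}$ satisfy $[a,a^{\dagger}]=aa^{\dagger}-a^{\dagger}a=1$ and act on the orthonormal number states $|m\rangle$ ($m=0,1,2,\dots$, $\langle m|n\rangle=\delta_{m,n}$) by $a|m\rangle=\sqrt{m}\,|m-1\rangle$, $a^{\dagger}|m\rangle=\sqrt{m+1}\,|m+1\rangle$. For $z\in\mathbb{C}$ the coherent state is $|z\rangle=e^{-|z|^2/2}\sum_{n\ge0}\frac{z^n}{\sqrt{n!}}|n\rangle$, so $a|z\rangle=z|z\rangle$, $\langle z|a^{\dagger}=\bar z\langle z|$, $\langle z|z\rangle=1$. The numbers $S_\lambda^{(r,r)}(n,k)$, $0\le k\le nr$, are defined by the normal ordering identity $\prod_{j=0}^{n-1}\big((a^{\dagger})^{r}a^{r}-j\lambda\big)=\sum_{k=0}^{nr}S_\lambda^{(r,r)}(n,k)(a^{\dagger})^{k}a^{k}$ (equivalently, the same identity with $a^{\dagger}$ replaced by multiplication by $x$ and $a$ by $d/dx$), and $\phi_{n,\lambda}^{(r,r)}(x)=\sum_{k=0}^{nr}S_\lambda^{(r,r)}(n,k)x^k$, $\phi_{n,\lambda}^{(r,r)}=\phi_{n,\lambda}^{(r,r)}(1)$. *)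

theory Defs
  imports Complex_Main
begin

definition ffact :: "real \<Rightarrow> nat \<Rightarrow> real" where
  "ffact x m = (\<Prod>i<m. x - real i)"

definition gfact :: "real \<Rightarrow> nat \<Rightarrow> real \<Rightarrow> real" where
  "gfact y n lam = (\<Prod>i<n. y - real i * lam)"

text \<open>States are coefficient sequences in the number basis |m>.\<close>
type_synonym state = "nat \<Rightarrow> complex"

definition ann :: "state \<Rightarrow> state" where
  "ann \<psi> = (\<lambda>m. complex_of_real (sqrt (real (Suc m))) * \<psi> (Suc m))"

definition adag :: "state \<Rightarrow> state" where
  "adag \<psi> = (\<lambda>m. if m = 0 then 0 else complex_of_real (sqrt (real m)) * \<psi> (m - 1))"

definition normal_op :: "nat \<Rightarrow> state \<Rightarrow> state" where
  "normal_op k \<psi> = (adag ^^ k) ((ann ^^ k) \<psi>)"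

fun prod_op :: "real \<Rightarrow> nat \<Rightarrow> nat \<Rightarrow> state \<Rightarrow> state" where
  "prod_op lam r 0 = id"
| "prod_op lam r (Suc j) =
     (\<lambda>\<psi>. (\<lambda>m. normal_op r \<psi> m - complex_of_real (real j * lam) * \<psi> m)) \<circ> prod_op lam r j"

definition S_lam :: "real \<Rightarrow> nat \<Rightarrow> nat \<Rightarrow> nat \<Rightarrow> real" where
  "S_lam lam r n = (THE c. (\<forall>k > n * r. c k = 0) \<and>
      (\<forall>\<psi>. prod_op lam r n \<psi> =
             (\<lambda>m. \<Sum>k\<le>n * r. complex_of_real (c k) * normal_op k \<psi> m)))"

definition phi :: "real \<Rightarrow> nat \<Rightarrow> nat \<Rightarrow> real \<Rightarrow> real" where
  "phi lam r n x = (\<Sum>k\<le>n * r. S_lam lam r n k * x ^ k)"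

definition coherent :: "complex \<Rightarrow> state" where
  "coherent z = (\<lambda>m. complex_of_real (exp (- (cmod z)\<^sup>2 / 2)) * z ^ m
                      / complex_of_real (sqrt (fact m)))"

definition braket :: "state \<Rightarrow> state \<Rightarrow> complex" where
  "braket \<phi> \<psi> = (\<Sum>m. cnj (\<phi> m) * \<psi> m)"

end

theory Submission
  imports Defs "HOL-Computational_Algebra.Polynomial"
begin

(* In the number basis |m> the operator (a^+)^k a^k is diagonal with eigenvalue (m)_k, so the
   product operator is diagonal with eigenvalue g(m) = ((m)_r)_{n,lambda}. Since g is a polynomial
   of degree at most nr, it is a combination of the falling factorials (x)_k with k <= nr; these
   coefficients are the numbers S_lambda(n,k), and Newton's forward difference formula identifies
   them as (1/k!) sum_p (-1)^(k-p) C(k,p) g(p). Finally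
   <z|(a^+)^k a^k|z> = e^(-|z|^2) sum_m (m)_k |z|^(2m) / m! = |z|^(2k). *)

lemma ffact_Suc: "ffact x (Suc k) = x * ffact (x - 1) k"
proof -
  have "(\<Prod>i<k. x - real (Suc i)) = (\<Prod>i<k. (x - 1) - real i)"
    by (intro prod.cong) auto
  then show ?thesis
    unfolding ffact_def by (simp only: prod.lessThan_Suc_shift) simp
qed

lemma ffact_eq_fact_mult_gbinomial: "ffact x k = fact k * (x gchoose k)"
  unfolding ffact_def gbinomial_mult_fact by (simp add: atLeast0LessThan)

lemma ffact_of_nat: "ffact (real m) k = fact k * real (m choose k)"
  by (simp add: ffact_eq_fact_mult_gbinomial binomial_gbinomial)

lemma ffact_of_nat_nonneg: "ffact (real m) k \<ge> 0"
  by (simp add: ffact_of_nat)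

lemma ffact_of_nat_eq_0: "m < k \<Longrightarrow> ffact (real m) k = 0"
  by (simp add: ffact_of_nat)

lemma funpow_ann_apply:
  "(ann ^^ k) \<psi> m = complex_of_real (sqrt (ffact (real (m + k)) k)) * \<psi> (m + k)"
proof (induction k arbitrary: \<psi>)
  case 0
  then show ?case by (simp add: ffact_def)
next
  case (Suc k)
  have "(ann ^^ Suc k) \<psi> m = (ann ^^ k) (ann \<psi>) m"
    by (simp only: funpow_Suc_right comp_apply)
  also have "\<dots> = complex_of_real (sqrt (ffact (real (m + k)) k))
                  * (complex_of_real (sqrt (real (Suc (m + k)))) * \<psi> (Suc (m + k)))"
    by (simp add: Suc ann_def)
  also have "\<dots> = complex_of_real (sqrt (ffact (real (m + Suc k)) (Suc k))) * \<psi> (m + Suc k)"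
    by (simp add: ffact_Suc real_sqrt_mult mult_ac)
  finally show ?case .
qed

lemma funpow_adag_apply:
  "(adag ^^ k) \<psi> m =
     (if m < k then 0 else complex_of_real (sqrt (ffact (real m) k)) * \<psi> (m - k))"
proof (induction k arbitrary: m)
  case 0
  then show ?case by (simp add: ffact_def)
next
  case (Suc k)
  show ?case
  proof (cases m)
    case 0
    then show ?thesis by (simp add: adag_def)
  next
    case (Suc m')
    then have "(adag ^^ Suc k) \<psi> m = complex_of_real (sqrt (real m)) * (adag ^^ k) \<psi> m'"
      by (simp add: adag_def)
    with Suc.IH[of m'] Suc show ?thesis
      by (simp add: ffact_Suc real_sqrt_mult)
  qed
qed

lemma normal_op_apply: "normal_op k \<psi> m = complex_of_real (ffact (real m) k) * \<psi> m"
proof (cases "m < k")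
  case True
  then show ?thesis by (simp add: normal_op_def funpow_adag_apply ffact_of_nat_eq_0)
next
  case False
  have "complex_of_real (sqrt (ffact (real m) k)) * complex_of_real (sqrt (ffact (real m) k))
        = complex_of_real (ffact (real m) k)"
    by (simp flip: of_real_mult add: ffact_of_nat_nonneg)
  with False show ?thesis
    by (simp add: normal_op_def funpow_adag_apply funpow_ann_apply mult.assoc[symmetric])
qed

lemma prod_op_apply:
  "prod_op lam r n \<psi> m = complex_of_real (gfact (ffact (real m) r) n lam) * \<psi> m"
  by (induction n) (simp_all add: normal_op_apply gfact_def algebra_simps)

definition ffact_poly :: "nat \<Rightarrow> real poly" where
  "ffact_poly k = (\<Prod>i<k. [:- real i, 1:])"

lemma poly_ffact_poly [simp]: "poly (ffact_poly k) x = ffact x k"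
  by (simp add: ffact_poly_def ffact_def poly_prod)

lemma degree_ffact_poly [simp]: "degree (ffact_poly k) = k"
  and lead_coeff_ffact_poly [simp]: "lead_coeff (ffact_poly k) = 1"
proof -
  have "degree (ffact_poly k) = k \<and> lead_coeff (ffact_poly k) = 1"
  proof (induction k)
    case 0
    then show ?case by (simp add: ffact_poly_def)
  next
    case (Suc k)
    have e: "ffact_poly (Suc k) = ffact_poly k * [:- real k, 1:]"
      by (simp add: ffact_poly_def)
    have "degree (ffact_poly (Suc k)) = Suc k"
      unfolding e using Suc by (subst degree_mult_eq) auto
    moreover have "lead_coeff (ffact_poly (Suc k)) = 1"
      unfolding e lead_coeff_mult using Suc.IH[THEN conjunct2] by simp
    ultimately show ?case
      by simp
  qed
  then show "degree (ffact_poly k) = k" "lead_coeff (ffact_poly k) = 1" by blast+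
qed

lemma ffact_expansion_exists:
  fixes P :: "real poly"
  assumes "degree P \<le> N"
  shows "\<exists>c. (\<forall>k>N. c k = 0) \<and> (\<forall>x. poly P x = (\<Sum>k\<le>N. c k * ffact x k))"
  using assms
proof (induction N arbitrary: P)
  case 0
  then show ?case
    by (intro exI[of _ "\<lambda>k. if k = 0 then coeff P 0 else 0"])
       (auto simp: ffact_def elim!: degree0_coeffs[THEN exE])
next
  case (Suc N)
  define Q where "Q = P - smult (coeff P (Suc N)) (ffact_poly (Suc N))"
  have "degree Q \<le> N"
  proof (rule degree_le, intro allI impI)
    fix i
    assume "N < i"
    then consider "i = Suc N" | "i > Suc N" by linarith
    then show "coeff Q i = 0"
      using lead_coeff_ffact_poly[of "Suc N"]
      by cases (use Suc.prems in \<open>simp_all add: Q_def coeff_eq_0\<close>)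
  qed
  then obtain c where c0: "\<forall>k>N. c k = 0" and c: "\<forall>x. poly Q x = (\<Sum>k\<le>N. c k * ffact x k)"
    using Suc.IH by blast
  define c' where "c' = c(Suc N := coeff P (Suc N))"
  have "poly P x = (\<Sum>k\<le>Suc N. c' k * ffact x k)" for x
  proof -
    have "(\<Sum>k\<le>N. c k * ffact x k) = (\<Sum>k\<le>N. c' k * ffact x k)"
      by (intro sum.cong) (auto simp: c'_def)
    then show ?thesis
      using c by (simp add: Q_def c'_def diff_eq_eq)
  qed
  moreover have "\<forall>k>Suc N. c' k = 0"
    using c0 by (simp add: c'_def)
  ultimately show ?case by blast
qed

lemma gfact_ffact_expansion_exists:
  "\<exists>c. (\<forall>k>n * r. c k = 0) \<and>
       (\<forall>x. gfact (ffact x r) n lam = (\<Sum>k\<le>n * r. c k * ffact x k))"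
proof -
  define P where "P = (\<Prod>i<n. ffact_poly r - [:real i * lam:])"
  have "degree P \<le> (\<Sum>i<n. degree (ffact_poly r - [:real i * lam:]))"
    unfolding P_def using degree_prod_sum_le[of "{..<n}"] by (simp add: o_def)
  also have "\<dots> \<le> (\<Sum>i<n. r)"
    by (intro sum_mono degree_diff_le) simp_all
  finally have "degree P \<le> n * r"
    by (simp add: mult.commute)
  moreover have "poly P x = gfact (ffact x r) n lam" for x
    by (simp add: P_def poly_prod gfact_def)
  ultimately show ?thesis
    using ffact_expansion_exists by metis
qed

definition newton_coeff :: "(nat \<Rightarrow> real) \<Rightarrow> nat \<Rightarrow> real" where
  "newton_coeff g k = (\<Sum>p\<le>k. (-1) ^ (k - p) / fact k * real (k choose p) * g p)"

lemma sum_alternating_choose_mult_choose: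
  assumes "j \<le> k"
  shows "(\<Sum>p\<le>k. (-1::real) ^ (k - p) * real (k choose p) * real (p choose j))
         = (if j = k then 1 else 0)"
proof -
  have "(\<Sum>p\<le>k. (-1::real) ^ (k - p) * real (k choose p) * real (p choose j))
      = (\<Sum>p=j..k. (-1::real) ^ (k - p) * real (k choose p) * real (p choose j))"
    by (rule sum.mono_neutral_right) auto
  also have "\<dots> = real (k choose j) * (\<Sum>p=j..k. (-1) ^ (k - p) * real ((k - j) choose (p - j)))"
    unfolding sum_distrib_left
  proof (intro sum.cong refl)
    fix p
    assume "p \<in> {j..k}"
    then have "real (k choose p) * real (p choose j) = real (k choose j) * real ((k - j) choose (p - j))"
      by (metis choose_mult atLeastAtMost_iff of_nat_mult)
    then show "(-1) ^ (k - p) * real (k choose p) * real (p choose j)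
               = real (k choose j) * ((-1) ^ (k - p) * real ((k - j) choose (p - j)))"
      by (simp add: algebra_simps)
  qed
  also have "(\<Sum>p=j..k. (-1::real) ^ (k - p) * real ((k - j) choose (p - j)))
           = (\<Sum>q\<le>k - j. (-1) ^ (k - j - q) * real ((k - j) choose q))"
    by (simp add: sum.atLeastAtMost_shift_0[OF assms] atLeast0AtMost)
  also have "\<dots> = 0 ^ (k - j)"
    using binomial_ring[of 1 "-1::real" "k - j"] by (simp add: mult.commute)
  finally show ?thesis
    using assms by simp
qed

lemma ffact_coeffs_eq_newton_coeff:
  assumes c0: "\<forall>k>N. c k = 0"
    and g: "\<And>m. g m = (\<Sum>j\<le>N. c j * ffact (real m) j)"
  shows "c = (\<lambda>k. if k \<le> N then newton_coeff g k else 0)"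
proof
  fix k
  show "c k = (if k \<le> N then newton_coeff g k else 0)"
  proof (cases "k \<le> N")
    case True
    have "(\<Sum>p\<le>k. (-1) ^ (k - p) * real (k choose p) * g p)
        = (\<Sum>j\<le>N. c j * fact j * (\<Sum>p\<le>k. (-1) ^ (k - p) * real (k choose p) * real (p choose j)))"
      by (simp add: g ffact_of_nat sum_distrib_left sum.swap[of _ "{..k}"] algebra_simps)
    also have "\<dots> = (\<Sum>j\<le>N. if j = k then c k * fact k else 0)"
    proof (intro sum.cong refl)
      fix j
      show "c j * fact j * (\<Sum>p\<le>k. (-1) ^ (k - p) * real (k choose p) * real (p choose j))
            = (if j = k then c k * fact k else 0)"
        by (cases "j \<le> k") (auto simp: sum_alternating_choose_mult_choose intro!: sum.neutral)
    qed
    also have "\<dots> = c k * fact k"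
      using True by simp
    finally show ?thesis
      using True by (simp add: newton_coeff_def sum_divide_distrib[symmetric])
  qed (use c0 in simp)
qed

lemma normal_ordering_iff_newton_coeff:
  "(\<forall>k > n * r. c k = 0) \<and>
     (\<forall>\<psi>. prod_op lam r n \<psi> = (\<lambda>m. \<Sum>k\<le>n * r. complex_of_real (c k) * normal_op k \<psi> m))
   \<longleftrightarrow> c = (\<lambda>k. if k \<le> n * r then newton_coeff (\<lambda>m. gfact (ffact (real m) r) n lam) k else 0)"
    (is "?P c \<longleftrightarrow> c = ?S")
proof
  assume "?P c"
  show "c = ?S"
  proof (rule ffact_coeffs_eq_newton_coeff)
    show "\<forall>k>n * r. c k = 0"
      using \<open>?P c\<close> by blast
    fix m
    from \<open>?P c\<close> have "prod_op lam r n (\<lambda>_. 1) m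
        = (\<Sum>k\<le>n * r. complex_of_real (c k) * normal_op k (\<lambda>_. 1) m)"
      by simp
    then show "gfact (ffact (real m) r) n lam = (\<Sum>j\<le>n * r. c j * ffact (real m) j)"
      by (simp add: prod_op_apply normal_op_apply flip: of_real_mult of_real_sum)
  qed
next
  assume c: "c = ?S"
  obtain e where e0: "\<forall>k>n * r. e k = 0"
    and e: "\<forall>x. gfact (ffact x r) n lam = (\<Sum>k\<le>n * r. e k * ffact x k)"
    using gfact_ffact_expansion_exists by blast
  have "e = c"
    unfolding c using e by (intro ffact_coeffs_eq_newton_coeff[OF e0]) simp
  have "prod_op lam r n \<psi> m = (\<Sum>k\<le>n * r. complex_of_real (c k) * normal_op k \<psi> m)" for \<psi> m
  proof -
    have "prod_op lam r n \<psi> m = complex_of_real (\<Sum>k\<le>n * r. c k * ffact (real m) k) * \<psi> m"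
      using e \<open>e = c\<close> by (simp add: prod_op_apply)
    also have "\<dots> = (\<Sum>k\<le>n * r. complex_of_real (c k) * normal_op k \<psi> m)"
      by (simp add: normal_op_apply sum_distrib_right mult.assoc)
    finally show ?thesis .
  qed
  moreover have "\<forall>k>n * r. c k = 0"
    by (simp add: c)
  ultimately show "?P c"
    by blast
qed

lemma S_lam_eq_newton_coeff:
  "S_lam lam r n = (\<lambda>k. if k \<le> n * r then newton_coeff (\<lambda>m. gfact (ffact (real m) r) n lam) k else 0)"
  unfolding S_lam_def normal_ordering_iff_newton_coeff by simp

lemma prod_op_normal_ordering:
  "prod_op lam r n \<psi> m = (\<Sum>k\<le>n * r. complex_of_real (S_lam lam r n k) * normal_op k \<psi> m)"
  using normal_ordering_iff_newton_coeff[of n r "S_lam lam r n" lam]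
  by (simp add: S_lam_eq_newton_coeff)

lemma phi_eq_newton_sum:
  "phi lam r n x = (\<Sum>p\<le>n * r. \<Sum>k=p..n * r.
      (-1) ^ (k - p) / fact k * real (k choose p) * gfact (ffact (real p) r) n lam * x ^ k)"
proof -
  have "phi lam r n x = (\<Sum>k\<le>n * r. \<Sum>p\<le>k.
      (-1) ^ (k - p) / fact k * real (k choose p) * gfact (ffact (real p) r) n lam * x ^ k)"
    by (simp add: phi_def S_lam_eq_newton_coeff newton_coeff_def sum_distrib_right)
  also have "\<dots> = (\<Sum>k\<le>n * r. \<Sum>p | p \<in> {..n * r} \<and> p \<le> k.
      (-1) ^ (k - p) / fact k * real (k choose p) * gfact (ffact (real p) r) n lam * x ^ k)"
    by (intro sum.cong) auto
  also have "\<dots> = (\<Sum>p\<le>n * r. \<Sum>k | k \<in> {..n * r} \<and> p \<le> k.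
      (-1) ^ (k - p) / fact k * real (k choose p) * gfact (ffact (real p) r) n lam * x ^ k)"
    by (rule sum.swap_restrict) auto
  also have "\<dots> = (\<Sum>p\<le>n * r. \<Sum>k=p..n * r.
      (-1) ^ (k - p) / fact k * real (k choose p) * gfact (ffact (real p) r) n lam * x ^ k)"
    by (intro sum.cong) auto
  finally show ?thesis .
qed

lemma sums_ffact_exp: "(\<lambda>m. x ^ m * ffact (real m) k / fact m) sums (x ^ k * exp x)"
proof -
  have "x ^ (i + k) * ffact (real (i + k)) k / fact (i + k) = x ^ k * (x ^ i / fact i)" for i
    unfolding ffact_of_nat by (simp add: binomial_fact power_add field_simps)
  moreover have "(\<lambda>i. x ^ k * (x ^ i / fact i)) sums (x ^ k * exp x)"
    using exp_converges[of x] by (intro sums_mult) (simp add: divide_inverse mult.commute)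
  ultimately have "(\<lambda>i. x ^ (i + k) * ffact (real (i + k)) k / fact (i + k)) sums (x ^ k * exp x)"
    by simp
  then show ?thesis
    by (subst (asm) sums_iff_shift) (simp add: ffact_of_nat_eq_0)
qed

lemma norm_coherent_squared:
  "(cmod (coherent z m))\<^sup>2 = exp (- (cmod z)\<^sup>2) * ((cmod z)\<^sup>2) ^ m / fact m"
proof -
  have "(cmod (coherent z m))\<^sup>2 = (exp (- (cmod z)\<^sup>2 / 2))\<^sup>2 * (cmod z ^ m)\<^sup>2 / fact m"
    by (simp add: coherent_def norm_mult norm_divide norm_power power_mult_distrib power_divide)
  also have "(exp (- (cmod z)\<^sup>2 / 2))\<^sup>2 = exp (- (cmod z)\<^sup>2)"
    by (simp add: power2_eq_square flip: exp_add)
  finally show ?thesis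
    by (simp flip: power_mult add: mult.commute)
qed

lemma coherent_normal_op_sums:
  "(\<lambda>m. cnj (coherent z m) * normal_op k (coherent z) m) sums complex_of_real (((cmod z)\<^sup>2) ^ k)"
proof -
  define x where "x = (cmod z)\<^sup>2"
  have summand: "cnj (coherent z m) * normal_op k (coherent z) m
        = complex_of_real (exp (- x) * (x ^ m * ffact (real m) k / fact m))" for m
  proof -
    have "cnj (coherent z m) * normal_op k (coherent z) m
          = complex_of_real (ffact (real m) k * (cmod (coherent z m))\<^sup>2)"
      using complex_norm_square[of "coherent z m"]
      by (simp add: normal_op_apply mult.commute mult.left_commute)
    then show ?thesis
      by (simp add: norm_coherent_squared x_def)
  qed
  have "(\<lambda>m. exp (- x) * (x ^ m * ffact (real m) k / fact m)) sums (x ^ k)"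
    using sums_mult[OF sums_ffact_exp, of "exp (- x)" x k] by (simp add: exp_minus field_simps)
  then show ?thesis
    unfolding summand x_def[symmetric] by (rule sums_of_real)
qed

lemma braket_coherent_prod_op:
  "braket (coherent z) (prod_op lam r n (coherent z)) = complex_of_real (phi lam r n ((cmod z)\<^sup>2))"
proof -
  have "(\<lambda>m. \<Sum>k\<le>n * r. complex_of_real (S_lam lam r n k) * (cnj (coherent z m) * normal_op k (coherent z) m))
        sums (\<Sum>k\<le>n * r. complex_of_real (S_lam lam r n k) * complex_of_real (((cmod z)\<^sup>2) ^ k))"
    by (intro sums_sum sums_mult coherent_normal_op_sums)
  then show ?thesis
    unfolding braket_def phi_def
    by (simp add: prod_op_normal_ordering sum_distrib_left mult.left_commute sums_iff)
qed

theorem theorem6: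
  fixes lam :: real and r n :: nat and z :: complex
  assumes "r \<ge> 1" and "n \<ge> 1"
  shows "complex_of_real (phi lam r n ((cmod z)\<^sup>2))
           = braket (coherent z) (prod_op lam r n (coherent z))
       \<and> braket (coherent z) (prod_op lam r n (coherent z))
           = complex_of_real (\<Sum>p\<le>n * r. \<Sum>k=p..n * r.
                 (-1) ^ (k - p) / fact k * real (k choose p)
                 * gfact (ffact (real p) r) n lam * ((cmod z)\<^sup>2) ^ k)
       \<and> (cmod z = 1 \<longrightarrow>
            complex_of_real (phi lam r n 1)
              = braket (coherent z) (prod_op lam r n (coherent z))
          \<and> braket (coherent z) (prod_op lam r n (coherent z))
              = complex_of_real (\<Sum>p\<le>n * r. \<Sum>k=p..n * r.
                 (-1) ^ (k - p) / fact k * real (k choose p)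
                 * gfact (ffact (real p) r) n lam))"
  unfolding braket_coherent_prod_op phi_eq_newton_sum by simp

end
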